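(* Let $n\ge 6$ be divisible by $6$, let $C_n$ be the cycle on $n$ vertices, let $\widehat{C}_n$ be obtained from $C_n$ by attaching a distinct new pendant vertex (leaf) to every vertex of $C_n$, and let $H_n$ be obtained from $\widehat{C}_n$ by replacing every such leaf by a copy of the subdivided $K_4$, i.e. identifying each leaf with the subdivision vertex of a new copy of the subdivided $K_4$. Then $\dfrac{Z(H_n)}{|V(H_n)|}\ge \dfrac{5}{12}$.
   Context: Zero forcing: given a graph and a set $S$ of vertices initially colored black (all others white), repeatedly apply the rule: if a black vertex $v$ has exactly one white neighbor $u$, then $u$ becomes black. $S$ is a zero forcing set if eventually every vertex becomes black. $Z(G)$ is the minimum size of a zero forcing set of $G$. Subdivided $K_4$: the complete graph on 4 vertices $a,b,c,e$ with the edge $ab$ subdivided by a new vertex $s$ (5 vertices, edges $as, sb, ac, ae, bc, be, ce$); $s$ is its subdivision vertex. *)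

theory Defs
  imports Complex_Main
begin

text \<open>One round of zero forcing: every black vertex v with exactly one white
neighbour u forces u to become black (all such forces applied simultaneously;
this yields the same final colouring as applying them one at a time).\<close>
definition zf_step :: "'a set \<Rightarrow> ('a \<Rightarrow> 'a \<Rightarrow> bool) \<Rightarrow> 'a set \<Rightarrow> 'a set" where
  "zf_step V E B = B \<union> {u \<in> V. u \<notin> B \<and> (\<exists>v \<in> B. E v u \<and>
       (\<forall>w \<in> V. E v w \<and> w \<notin> B \<longrightarrow> w = u))}"

definition zero_forcing_set :: "'a set \<Rightarrow> ('a \<Rightarrow> 'a \<Rightarrow> bool) \<Rightarrow> 'a set \<Rightarrow> bool" where
  "zero_forcing_set V E S \<longleftrightarrow> S \<subseteq> V \<and> (\<exists>k. (zf_step V E ^^ k) S = V)"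

definition zero_forcing_number :: "'a set \<Rightarrow> ('a \<Rightarrow> 'a \<Rightarrow> bool) \<Rightarrow> nat" where
  "zero_forcing_number V E = Min (card ` {S. zero_forcing_set V E S})"

text \<open>Vertex (i,0) is the i-th cycle vertex (i < n); (i,k) for
k = 1..5 are the vertices s,a,b,c,e of the i-th copy of the subdivided K4, where
s = (i,1) is the subdivision vertex identified with the leaf attached to (i,0).\<close>
definition H_V :: "nat \<Rightarrow> (nat \<times> nat) set" where
  "H_V n = {0..<n} \<times> {0..5}"

definition H_E0 :: "nat \<Rightarrow> nat \<times> nat \<Rightarrow> nat \<times> nat \<Rightarrow> bool" where
  "H_E0 n x y = (case x of (i,k) \<Rightarrow> case y of (j,l) \<Rightarrow>
     i < n \<and> j < n \<and>
     ((k = 0 \<and> l = 0 \<and> j = (i + 1) mod n) \<or>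
      (i = j \<and> (k,l) \<in> {(0,1), (1,2), (1,3), (2,4), (2,5), (3,4), (3,5), (4,5)})))"

definition H_E :: "nat \<Rightarrow> nat \<times> nat \<Rightarrow> nat \<times> nat \<Rightarrow> bool" where
  "H_E n x y \<longleftrightarrow> H_E0 n x y \<or> H_E0 n y x"

end

theory Submission
  imports Defs
begin

text \<open>Every zero forcing set S of H_n admits a chronology: a time function under which each
white vertex is forced by a neighbour all of whose other neighbours are black earlier.
Both vertices of a twin pair cannot be forced, so S meets each pair {a,b}, {c,e} of every
copy of the subdivided K4. A copy meeting S in only these two vertices must have its
subdivision vertex forced from the cycle, so its cycle vertex is forced by a cycle neighbour
whose own copy is not of this kind; since a vertex forces at most one neighbour, at most
half of the copies are cheap. Hence |S| \<ge> 3n - n/2 = 5n/2 = (5/12) |V(H_n)|.\<close>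

definition forcing_chronology ::
    "'a set \<Rightarrow> ('a \<Rightarrow> 'a \<Rightarrow> bool) \<Rightarrow> 'a set \<Rightarrow> ('a \<Rightarrow> nat) \<Rightarrow> bool" where
  "forcing_chronology V E S \<tau> \<longleftrightarrow>
     (\<forall>x \<in> V - S. \<exists>w \<in> V. E w x \<and> \<tau> w < \<tau> x \<and> (\<forall>y \<in> V. E w y \<and> y \<noteq> x \<longrightarrow> \<tau> y < \<tau> x))"

lemma zf_step_subset: "B \<subseteq> V \<Longrightarrow> zf_step V E B \<subseteq> V"
  by (auto simp: zf_step_def)

lemma zero_forcing_set_imp_chronology:
  assumes "zero_forcing_set V E S"
  obtains \<tau> where "forcing_chronology V E S \<tau>"
proof -
  define B where "B t = (zf_step V E ^^ t) S" for t
  from assms obtain k where SV: "S \<subseteq> V" and Bk: "B k = V"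
    by (auto simp: zero_forcing_set_def B_def)
  have B0: "B 0 = S" and B_Suc: "B (Suc t) = zf_step V E (B t)" for t
    by (simp_all add: B_def)
  have B_V: "B t \<subseteq> V" for t
    by (induction t) (simp_all add: B0 SV B_Suc zf_step_subset)
  define \<tau> where "\<tau> x = (LEAST t. x \<in> B t)" for x
  have in_B_\<tau>: "x \<in> B (\<tau> x)" if "x \<in> V" for x
    unfolding \<tau>_def using that Bk by (metis LeastI)
  have \<tau>_le: "x \<in> B t \<Longrightarrow> \<tau> x \<le> t" for x t
    unfolding \<tau>_def by (rule Least_le)
  have "forcing_chronology V E S \<tau>"
    unfolding forcing_chronology_def
  proof
    fix x assume x: "x \<in> V - S"
    then obtain t where t: "\<tau> x = Suc t"
      using in_B_\<tau>[of x] B0 by (metis DiffE not0_implies_Suc)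
    have "x \<notin> B t" using \<tau>_le[of x t] t by auto
    moreover have "x \<in> zf_step V E (B t)" using in_B_\<tau>[of x] x t B_Suc by auto
    ultimately obtain v where v: "v \<in> B t" "E v x"
      and others_black: "\<forall>w \<in> V. E v w \<and> w \<notin> B t \<longrightarrow> w = x"
      by (auto simp: zf_step_def)
    show "\<exists>w \<in> V. E w x \<and> \<tau> w < \<tau> x \<and> (\<forall>y \<in> V. E w y \<and> y \<noteq> x \<longrightarrow> \<tau> y < \<tau> x)"
    proof (intro bexI conjI ballI impI)
      show "v \<in> V" using v(1) B_V by auto
      show "\<tau> v < \<tau> x" using \<tau>_le[OF v(1)] t by simp
      fix y assume "y \<in> V" "E v y \<and> y \<noteq> x"
      then have "y \<in> B t" using others_black by auto
      then show "\<tau> y < \<tau> x" using \<tau>_le t by fastforce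
    qed (fact v(2))
  qed
  then show thesis by (rule that)
qed

text \<open>Twins u, v (adjacent or not) cannot both be forced: the forcer of either one is the
other twin or a common neighbour, so each would turn black before the other.\<close>
lemma forcing_chronology_twin:
  assumes chronology: "forcing_chronology V E S \<tau>" and "u \<in> V" "v \<in> V" "u \<noteq> v"
    and twins: "\<forall>w \<in> V - {u, v}. E w u \<longleftrightarrow> E w v"
  shows "u \<in> S \<or> v \<in> S"
proof (rule ccontr)
  have earlier: "\<tau> a < \<tau> b"
    if ab: "a \<in> V" "b \<in> V - S" "a \<noteq> b" "\<forall>w \<in> V - {a, b}. E w a \<longleftrightarrow> E w b" for a b
  proof -
    obtain w where w: "w \<in> V" "E w b" "\<tau> w < \<tau> b"
      and others: "\<forall>y \<in> V. E w y \<and> y \<noteq> b \<longrightarrow> \<tau> y < \<tau> b"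
      using chronology ab(2) unfolding forcing_chronology_def by blast
    show ?thesis
    proof (cases "w = a")
      case False
      moreover have "w \<noteq> b" using w(3) by auto
      ultimately have "E w a" using w(1,2) ab(4) by blast
      then show ?thesis using others ab(1,3) by blast
    qed (use w in simp)
  qed
  assume "\<not> (u \<in> S \<or> v \<in> S)"
  then have "\<tau> u < \<tau> v" "\<tau> v < \<tau> u"
    using earlier[of u v] earlier[of v u] twins assms(2-4) by (auto simp: insert_commute)
  then show False by simp
qed

lemma zero_forcing_number_attained:
  assumes "finite V"
  obtains S where "zero_forcing_set V E S" "zero_forcing_number V E = card S"
proof -
  let ?Z = "{S. zero_forcing_set V E S}"
  have "card ` ?Z \<subseteq> card ` Pow V" by (auto simp: zero_forcing_set_def)
  then have "finite (card ` ?Z)" using assms by (simp add: finite_subset)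
  moreover have "V \<in> ?Z" by (auto simp: zero_forcing_set_def intro: exI[of _ 0])
  ultimately have "Min (card ` ?Z) \<in> card ` ?Z" by (intro Min_in) blast+
  then show thesis using that unfolding zero_forcing_number_def by blast
qed

definition H_nbrs :: "nat \<Rightarrow> nat \<times> nat \<Rightarrow> (nat \<times> nat) set" where
  "H_nbrs n x = (case x of (i, k) \<Rightarrow>
     if k = 0 then {((i + 1) mod n, 0), ((i + n - 1) mod n, 0), (i, 1)}
     else if k = 1 then {(i, 0), (i, 2), (i, 3)}
     else if k \<le> 3 then {(i, 1), (i, 4), (i, 5)}
     else if k = 4 then {(i, 2), (i, 3), (i, 5)}
     else {(i, 2), (i, 3), (i, 4)})"

lemma succ_mod_iff_pred_mod:
  fixes i j n :: nat
  assumes "i < n" "j < n"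
  shows "i = (j + 1) mod n \<longleftrightarrow> j = (i + n - 1) mod n"
proof -
  have "(i + n - 1) mod n = (if i = 0 then n - 1 else i - 1)"
  proof (cases "i = 0")
    case False
    then have "i + n - 1 = (i - 1) + n" by auto
    moreover have "((i - 1) + n) mod n = i - 1" using assms(1) by simp
    ultimately show ?thesis using False by simp
  qed (use assms in auto)
  moreover have "(j + 1) mod n = (if j + 1 = n then 0 else j + 1)"
    using assms(2) by (auto simp: mod_if)
  ultimately show ?thesis using assms by auto
qed

lemma H_E_iff_H_nbrs:
  assumes "3 \<le> n" "x \<in> H_V n"
  shows "H_E n x y \<longleftrightarrow> y \<in> H_nbrs n x"
proof -
  obtain i k where x: "x = (i, k)" "i < n" "k \<le> 5" using assms(2) by (auto simp: H_V_def)
  obtain j l where y: "y = (j, l)" by fastforce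
  have "k = 0 \<or> k = 1 \<or> k = 2 \<or> k = 3 \<or> k = 4 \<or> k = 5" using x(3) by auto
  then show ?thesis using succ_mod_iff_pred_mod[of i n j] assms(1) x y
    by (elim disjE) (auto simp: H_E_def H_E0_def H_nbrs_def)
qed

lemma H_E_sym: "H_E n x y \<longleftrightarrow> H_E n y x"
  by (auto simp: H_E_def)

lemma H_nbrs_subset: "0 < n \<Longrightarrow> x \<in> H_V n \<Longrightarrow> H_nbrs n x \<subseteq> H_V n"
  by (auto simp: H_nbrs_def H_V_def split: prod.splits)

lemma H_nbrs_twins:
  "(k, l) \<in> {(2, 3), (4, 5)} \<Longrightarrow> H_nbrs n (i, k) - {(i, l)} = H_nbrs n (i, l) - {(i, k)}"
  by (elim insertE emptyE) (auto simp: H_nbrs_def)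

lemma H_twins:
  assumes "3 \<le> n" "i < n" "(k, l) \<in> {(2, 3), (4, 5)}" "w \<in> H_V n - {(i, k), (i, l)}"
  shows "H_E n w (i, k) \<longleftrightarrow> H_E n w (i, l)"
proof -
  have "(i, k) \<in> H_V n" "(i, l) \<in> H_V n" using assms(2,3) by (auto simp: H_V_def)
  then have "H_E n w (i, k) \<longleftrightarrow> w \<in> H_nbrs n (i, k)" "H_E n w (i, l) \<longleftrightarrow> w \<in> H_nbrs n (i, l)"
    using H_E_iff_H_nbrs[OF assms(1)] H_E_sym[of n w] by blast+
  then show ?thesis using H_nbrs_twins[OF assms(3), of n i] assms(4) by blast
qed

text \<open>As S meets both twin pairs of every copy, a lean copy meets S in exactly two vertices,
and every other copy in at least three.\<close>
definition lean_gadget :: "(nat \<times> nat) set \<Rightarrow> nat \<Rightarrow> bool" where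
  "lean_gadget S i \<longleftrightarrow> (i, 0) \<notin> S \<and> (i, 1) \<notin> S \<and>
     \<not> {(i, 2), (i, 3)} \<subseteq> S \<and> \<not> {(i, 4), (i, 5)} \<subseteq> S"

lemma card_gadget_inter_ge:
  assumes "(i, 2) \<in> S \<or> (i, 3) \<in> S" "(i, 4) \<in> S \<or> (i, 5) \<in> S"
  shows "3 \<le> card (S \<inter> {i} \<times> {..5}) + of_bool (lean_gadget S i)"
proof -
  obtain a c where ac: "a \<in> {2, 3}" "(i, a) \<in> S" "c \<in> {4, 5}" "(i, c) \<in> S"
    using assms by blast
  have fin: "finite (S \<inter> {i} \<times> {..5})" by simp
  show ?thesis
  proof (cases "lean_gadget S i")
    case True
    have "{(i, a), (i, c)} \<subseteq> S \<inter> {i} \<times> {..5}" using ac by auto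
    moreover have "card {(i, a), (i, c)} = 2" using ac by auto
    ultimately have "2 \<le> card (S \<inter> {i} \<times> {..5})" using card_mono[OF fin] by metis
    then show ?thesis using True by simp
  next
    case False
    then have "(i, 0) \<in> S \<or> (i, 1) \<in> S \<or> {(i, 2), (i, 3)} \<subseteq> S \<or> {(i, 4), (i, 5)} \<subseteq> S"
      unfolding lean_gadget_def by blast
    then have "\<exists>z \<le> 5. z \<noteq> a \<and> z \<noteq> c \<and> (i, z) \<in> S"
    proof (elim disjE)
      assume "(i, 0) \<in> S" with ac show ?thesis by (intro exI[of _ 0]) auto
    next
      assume "(i, 1) \<in> S" with ac show ?thesis by (intro exI[of _ 1]) auto
    next
      assume "{(i, 2), (i, 3)} \<subseteq> S" with ac show ?thesis by (intro exI[of _ "5 - a"]) auto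
    next
      assume "{(i, 4), (i, 5)} \<subseteq> S" with ac show ?thesis by (intro exI[of _ "9 - c"]) auto
    qed
    then obtain z where z: "z \<le> 5" "z \<noteq> a" "z \<noteq> c" "(i, z) \<in> S" by blast
    have "{(i, a), (i, c), (i, z)} \<subseteq> S \<inter> {i} \<times> {..5}" using ac z by auto
    moreover have "card {(i, a), (i, c), (i, z)} = 3" using ac z by auto
    ultimately have "3 \<le> card (S \<inter> {i} \<times> {..5})" using card_mono[OF fin] by metis
    then show ?thesis by simp
  qed
qed

locale H_chronology =
  fixes n :: nat and S :: "(nat \<times> nat) set" and \<tau> :: "nat \<times> nat \<Rightarrow> nat"
  assumes n_ge_3: "3 \<le> n"
    and chronology: "forcing_chronology (H_V n) (H_E n) S \<tau>"
begin

definition forces :: "nat \<times> nat \<Rightarrow> nat \<times> nat \<Rightarrow> bool" where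
  "forces w x \<longleftrightarrow> x \<in> H_nbrs n w \<and> \<tau> w < \<tau> x \<and> (\<forall>y \<in> H_nbrs n w. y \<noteq> x \<longrightarrow> \<tau> y < \<tau> x)"

lemma forced:
  assumes "x \<in> H_V n" "x \<notin> S"
  obtains w where "w \<in> H_nbrs n x" "forces w x"
proof -
  obtain w where w: "w \<in> H_V n" "H_E n w x" "\<tau> w < \<tau> x"
    "\<forall>y \<in> H_V n. H_E n w y \<and> y \<noteq> x \<longrightarrow> \<tau> y < \<tau> x"
    using chronology assms unfolding forcing_chronology_def by blast
  have "w \<in> H_nbrs n x" "x \<in> H_nbrs n w"
    using w(2) H_E_iff_H_nbrs[OF n_ge_3] H_E_sym assms(1) w(1) by metis+
  moreover have "H_nbrs n w \<subseteq> H_V n" using H_nbrs_subset w(1) n_ge_3 by simp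
  ultimately have "forces w x"
    using w H_E_iff_H_nbrs[OF n_ge_3 w(1)] unfolding forces_def by blast
  then show thesis using that \<open>w \<in> H_nbrs n x\<close> by blast
qed

lemma forces_unique: "forces w x \<Longrightarrow> forces w x' \<Longrightarrow> x = x'"
  unfolding forces_def by force

lemma twin_in_S:
  assumes "i < n" "(k, l) \<in> {(2, 3), (4, 5)}"
  shows "(i, k) \<in> S \<or> (i, l) \<in> S"
  by (rule forcing_chronology_twin[OF chronology])
     (use assms H_twins[OF n_ge_3 assms] in \<open>auto simp: H_V_def\<close>)

text \<open>Within a lean copy the subdivision vertex s cannot be forced from inside: a forcer
a or b of s needs c and e black before s, but the white one of c, e can only be forced by
the other one, after a and b, and the white one of a, b then has no forcer left.\<close>
lemma lean_gadget_forces_subdivision_vertex: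
  assumes "i < n" "lean_gadget S i"
  shows "forces (i, 0) (i, 1)"
proof -
  have forced_at: "\<exists>w \<in> H_nbrs n (i, k). forces w (i, k)" if "k \<le> 5" "(i, k) \<notin> S" for k
    using forced[of "(i, k)"] that assms(1) by (auto simp: H_V_def)
  have S_ab: "(i, 2) \<in> S \<longleftrightarrow> (i, 3) \<notin> S" and S_ce: "(i, 4) \<in> S \<longleftrightarrow> (i, 5) \<notin> S"
    using twin_in_S[OF assms(1)] assms(2) by (auto simp: lean_gadget_def)
  obtain w where w: "w \<in> H_nbrs n (i, 1)" "forces w (i, 1)"
    using forced_at[of 1] assms(2) by (auto simp: lean_gadget_def)
  have "w \<noteq> (i, 2)" "w \<noteq> (i, 3)"
    using w S_ab S_ce forced_at[of 2] forced_at[of 3] forced_at[of 4] forced_at[of 5]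
    by (auto simp: forces_def H_nbrs_def)
  then have "w = (i, 0)" using w(1) by (auto simp: H_nbrs_def)
  then show ?thesis using w(2) by simp
qed

lemma lean_gadget_forced_by_non_lean:
  assumes "i < n" "lean_gadget S i"
  obtains j where "j < n" "\<not> lean_gadget S j" "forces (j, 0) (i, 0)"
proof -
  have "(i, 0) \<in> H_V n" using assms(1) by (simp add: H_V_def)
  moreover have "(i, 0) \<notin> S" using assms(2) unfolding lean_gadget_def by blast
  ultimately obtain w where w: "w \<in> H_nbrs n (i, 0)" "forces w (i, 0)" by (rule forced)
  have "\<tau> (i, 0) < \<tau> (i, 1)"
    using lean_gadget_forces_subdivision_vertex[OF assms] unfolding forces_def by blast
  moreover have "\<tau> w < \<tau> (i, 0)" using w(2) unfolding forces_def by blast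
  ultimately have "w \<noteq> (i, 1)" by auto
  with w(1) have "w \<in> {((i + 1) mod n, 0), ((i + n - 1) mod n, 0)}"
    by (simp add: H_nbrs_def)
  then obtain j where j: "w = (j, 0)" "j < n"
    using n_ge_3 by auto
  have "\<not> lean_gadget S j"
  proof
    assume "lean_gadget S j"
    with j(2) have "forces (j, 0) (j, 1)" by (rule lean_gadget_forces_subdivision_vertex)
    from forces_unique[OF this w(2)[unfolded j(1)]] show False by simp
  qed
  with j w(2) show thesis using that by blast
qed

lemma card_lean_gadgets_le: "2 * card {i \<in> {..<n}. lean_gadget S i} \<le> n"
proof -
  define D where "D = {i \<in> {..<n}. lean_gadget S i}"
  have "\<forall>i \<in> D. \<exists>j. j \<in> {..<n} - D \<and> forces (j, 0) (i, 0)"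
    using lean_gadget_forced_by_non_lean unfolding D_def by (metis (no_types, lifting) DiffI
        lessThan_iff mem_Collect_eq)
  then obtain f where f: "\<And>i. i \<in> D \<Longrightarrow> f i \<in> {..<n} - D \<and> forces (f i, 0) (i, 0)"
    by metis
  have "inj_on f D"
    using f forces_unique by (metis inj_onI prod.inject)
  then have "card D \<le> card ({..<n} - D)"
    using f by (intro card_inj_on_le) auto
  also have "\<dots> = n - card D"
    using card_Diff_subset[of D "{..<n}"] finite_subset[of D "{..<n}"] by (auto simp: D_def)
  finally show ?thesis unfolding D_def by simp
qed

lemma card_S_lower_bound:
  assumes "S \<subseteq> H_V n"
  shows "5 * n \<le> 2 * card S"
proof -
  have "S = (\<Union>i<n. S \<inter> {i} \<times> {..5})" using assms by (auto simp: H_V_def)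
  also have "card \<dots> = (\<Sum>i<n. card (S \<inter> {i} \<times> {..5}))"
    by (rule card_UN_disjoint) auto
  finally have card_S: "card S = (\<Sum>i<n. card (S \<inter> {i} \<times> {..5}))" .
  have gadget: "3 \<le> card (S \<inter> {i} \<times> {..5}) + of_bool (lean_gadget S i)" if "i < n" for i
    using card_gadget_inter_ge twin_in_S[OF that, of 2 3] twin_in_S[OF that, of 4 5] by simp
  have "3 * n = (\<Sum>i<n. 3 :: nat)" by simp
  also have "\<dots> \<le> (\<Sum>i<n. card (S \<inter> {i} \<times> {..5}) + of_bool (lean_gadget S i))"
    by (rule sum_mono) (simp add: gadget)
  also have "\<dots> = card S + card {i \<in> {..<n}. lean_gadget S i}"
    by (simp add: sum.distrib card_S Collect_conj_eq lessThan_def)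
  finally show ?thesis using card_lean_gadgets_le by linarith
qed

end

lemma card_zero_forcing_set_H:
  assumes "3 \<le> n" "zero_forcing_set (H_V n) (H_E n) S"
  shows "5 * n \<le> 2 * card S"
proof -
  obtain \<tau> where "forcing_chronology (H_V n) (H_E n) S \<tau>"
    using zero_forcing_set_imp_chronology[OF assms(2)] .
  then interpret H_chronology n S \<tau> using assms(1) by unfold_locales
  show ?thesis using assms(2) by (intro card_S_lower_bound) (simp add: zero_forcing_set_def)
qed

theorem proposition2:
  fixes n :: nat
  assumes "n \<ge> 6" and "6 dvd n"
  shows "real (zero_forcing_number (H_V n) (H_E n)) / real (card (H_V n)) \<ge> 5 / 12"
proof -
  have "finite (H_V n)" by (simp add: H_V_def)
  then obtain S where S: "zero_forcing_set (H_V n) (H_E n) S"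
    "zero_forcing_number (H_V n) (H_E n) = card S"
    by (rule zero_forcing_number_attained)
  \<comment> \<open>The lower bound holds for every n \<ge> 3.\<close>
  have "5 * n \<le> 2 * card S" using card_zero_forcing_set_H S(1) assms(1) by simp
  moreover have "card (H_V n) = 6 * n" by (simp add: H_V_def card_cartesian_product)
  ultimately show ?thesis using S(2) assms(1) by (simp add: field_simps)
qed

end
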